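(* Let $n\ge 1$, $V=\mathbb F_2^n$, $\rho\in\mathrm{Sym}(V)\setminus\mathrm{AGL}(V)$ and $\theta\in\mathrm{GL}(V)$. Define $\overline\rho,\overline\theta\in\mathrm{Sym}(V\times V)$ by $$(x,y)\overline\rho=(x+y,\ y+(x+y)\rho),\qquad (x,y)\overline\theta=((x+y)\theta,\ y).$$ If the group $\langle \rho, T_n\rangle\le \mathrm{Sym}(V)$ is primitive on $V$, then the group $\Gamma(\mathrm{LM}(\rho,\theta))=\langle \overline\rho,\overline\theta,T_{2n}\rangle\le\mathrm{Sym}(V\times V)$ is primitive on $V\times V$ (indeed already $\langle\overline\rho,T_{2n}\rangle$ is primitive).
   Context: Maps act on the right: $x\rho$ is the image of $x$ under $\rho$ and $fg$ means first $f$ then $g$. $T_n$ is the group of translations $\sigma_v:x\mapsto x+v$ ($v\in V$) of $V$, and $T_{2n}$ is the group of translations $\sigma_{(v,w)}:(x,y)\mapsto(x+v,y+w)$ of $V\times V$. $\mathrm{AGL}(V)$ is the group of affine permutations of $V$ and $\mathrm{GL}(V)$ the group of linear ones. A group $G$ acting on a set $M$ is primitive if it is transitive and there is no $G$-invariant partition of $M$ other than $\{M\}$ and the partition into singletons. The round functions of the Lai–Massey cipher $\mathrm{LM}(\rho,\theta)$ are $\overline\rho\,\overline\theta\,\sigma_{(k\theta,k)}$ for round keys $k\in V$, i.e. $(x,y)\mapsto((x+(x+y)\rho+k)\theta,\ y+(x+y)\rho+k)$, so $\Gamma(\mathrm{LM}(\rho,\theta))$ contains the group generated by these round functions. *)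

theory Defs
  imports "HOL-Analysis.Analysis" "HOL-Library.Z2"
begin

text \<open>V = F_2^n is modelled as the type bit ^ 'n for a finite index type 'n
 (so n = CARD('n) >= 1 automatically).\<close>

inductive_set gen_group :: "('a \<Rightarrow> 'a) set \<Rightarrow> ('a \<Rightarrow> 'a) set" for S where
  gen_id: "id \<in> gen_group S"
| gen_gen: "s \<in> S \<Longrightarrow> s \<in> gen_group S"
| gen_inv: "s \<in> S \<Longrightarrow> inv s \<in> gen_group S"
| gen_comp: "f \<in> gen_group S \<Longrightarrow> g \<in> gen_group S \<Longrightarrow> f \<circ> g \<in> gen_group S"

definition transitive_on :: "('a \<Rightarrow> 'a) set \<Rightarrow> 'a set \<Rightarrow> bool" where
  "transitive_on G M \<longleftrightarrow> (\<forall>x\<in>M. \<forall>y\<in>M. \<exists>g\<in>G. g x = y)"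

definition invariant_partition :: "('a \<Rightarrow> 'a) set \<Rightarrow> 'a set \<Rightarrow> 'a set set \<Rightarrow> bool" where
  "invariant_partition G M P \<longleftrightarrow>
     (\<forall>B\<in>P. B \<noteq> {} \<and> B \<subseteq> M) \<and> \<Union>P = M \<and>
     (\<forall>B\<in>P. \<forall>C\<in>P. B \<noteq> C \<longrightarrow> B \<inter> C = {}) \<and>
     (\<forall>g\<in>G. \<forall>B\<in>P. g ` B \<in> P)"

definition primitive_on :: "('a \<Rightarrow> 'a) set \<Rightarrow> 'a set \<Rightarrow> bool" where
  "primitive_on G M \<longleftrightarrow> transitive_on G M \<and>
     (\<forall>P. invariant_partition G M P \<longrightarrow> P = {M} \<or> P = (\<lambda>x. {x}) ` M)"

definition GL :: "(bit ^ 'n \<Rightarrow> bit ^ 'n) set" where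
  "GL = {A. Vector_Spaces.linear (*s) (*s) A \<and> bij A}"

definition AGL :: "(bit ^ 'n \<Rightarrow> bit ^ 'n) set" where
  "AGL = {f. \<exists>A\<in>GL. \<exists>b. f = (\<lambda>x. A x + b)}"

definition Tn :: "(bit ^ 'n \<Rightarrow> bit ^ 'n) set" where
  "Tn = {(\<lambda>x. x + v) | v. True}"

definition T2n :: "((bit ^ 'n) \<times> (bit ^ 'n) \<Rightarrow> (bit ^ 'n) \<times> (bit ^ 'n)) set" where
  "T2n = {(\<lambda>(x, y). (x + v, y + w)) | v w. True}"

definition rho_bar :: "(bit ^ 'n \<Rightarrow> bit ^ 'n) \<Rightarrow> ((bit ^ 'n) \<times> (bit ^ 'n) \<Rightarrow> (bit ^ 'n) \<times> (bit ^ 'n))" where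
  "rho_bar \<rho> = (\<lambda>(x, y). (x + y, y + \<rho> (x + y)))"

definition theta_bar :: "(bit ^ 'n \<Rightarrow> bit ^ 'n) \<Rightarrow> ((bit ^ 'n) \<times> (bit ^ 'n) \<Rightarrow> (bit ^ 'n) \<times> (bit ^ 'n))" where
  "theta_bar \<theta> = (\<lambda>(x, y). (\<theta> (x + y), y))"

end

theory Submission
  imports Defs
begin

text \<open>
  If a permutation group G of an abelian group A contains all translations, the block of a
  G-invariant partition that contains 0 is a subgroup X whose cosets are permuted by G, and
  conversely; so G is primitive iff every such X is trivial.

  Let U \<le> V \<times> V be such a subgroup for \<open>\<langle>rho_bar \<rho>, T2n\<rangle>\<close>. Its projection
  \<open>snd ` U\<close> and its kernel \<open>{u. (u, 0) \<in> U}\<close> are subgroups of V closed under the derivatives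
  \<open>x \<mapsto> \<rho> (x + u) + \<rho> x\<close> (u in the subgroup), hence their cosets are permuted by
  \<open>\<langle>\<rho>, Tn\<rangle>\<close>, and they are trivial by primitivity. If the projection is 0, then U = 0
  because \<rho> is injective; if projection and kernel are both V, then U = V; and if the
  projection is V while the kernel is 0, all derivatives of \<rho> are constant, i.e. \<rho> is affine.
\<close>

section \<open>Blocks of permutation groups containing the translations\<close>

definition add_subgroup :: "'a::ab_group_add set \<Rightarrow> bool" where
  "add_subgroup X \<longleftrightarrow> 0 \<in> X \<and> (\<forall>a\<in>X. \<forall>b\<in>X. a + b \<in> X) \<and> (\<forall>a\<in>X. - a \<in> X)"

definition preserves_cosets :: "('a::ab_group_add \<Rightarrow> 'a) \<Rightarrow> 'a set \<Rightarrow> bool" where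
  "preserves_cosets g X \<longleftrightarrow> (\<forall>x. g ` ((+) x ` X) = (+) (g x) ` X)"

lemma add_subgroup_zero: "add_subgroup X \<Longrightarrow> 0 \<in> X"
  and add_subgroup_add: "add_subgroup X \<Longrightarrow> a \<in> X \<Longrightarrow> b \<in> X \<Longrightarrow> a + b \<in> X"
  and add_subgroup_uminus: "add_subgroup X \<Longrightarrow> a \<in> X \<Longrightarrow> - a \<in> X"
  by (simp_all add: add_subgroup_def)

lemma coset_eq_if_mem:
  assumes X: "add_subgroup X" and a: "a \<in> X"
  shows "(+) (x + a) ` X = (+) x ` X"
proof
  show "(+) (x + a) ` X \<subseteq> (+) x ` X"
  proof
    fix z assume "z \<in> (+) (x + a) ` X"
    then obtain u where "u \<in> X" "z = x + (a + u)"
      by (auto simp: add.assoc)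
    then show "z \<in> (+) x ` X"
      using add_subgroup_add[OF X a] by blast
  qed
  show "(+) x ` X \<subseteq> (+) (x + a) ` X"
  proof
    fix z assume "z \<in> (+) x ` X"
    then obtain u where "u \<in> X" "z = (x + a) + (- a + u)"
      by (auto simp: add.assoc)
    then show "z \<in> (+) (x + a) ` X"
      using add_subgroup_add[OF X add_subgroup_uminus[OF X a]] by blast
  qed
qed

lemma invariant_partition_block_eq:
  assumes "invariant_partition G M P" and "B \<in> P" "C \<in> P" and "z \<in> B" "z \<in> C"
  shows "B = C"
  using assms unfolding invariant_partition_def by blast

lemma invariant_partition_image:
  assumes "invariant_partition G M P" and "g \<in> G" "B \<in> P"
  shows "g ` B \<in> P"
  using assms by (simp add: invariant_partition_def)

lemma invariant_partition_nonempty: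
  assumes "invariant_partition G M P" and "B \<in> P"
  shows "B \<noteq> {}"
  using assms by (simp add: invariant_partition_def)

lemma invariant_partition_ex_block:
  assumes "invariant_partition G M P" and "x \<in> M"
  obtains B where "B \<in> P" "x \<in> B"
  using assms unfolding invariant_partition_def by blast

lemma invariant_partition_translate_block:
  fixes G :: "('a::ab_group_add \<Rightarrow> 'a) set"
  assumes "\<And>v. (\<lambda>x. x + v) \<in> G" and "invariant_partition G M P" and "C \<in> P"
  shows "(+) v ` C \<in> P"
proof -
  have "(\<lambda>x. x + v) ` C \<in> P"
    using invariant_partition_image[OF assms(2) assms(1) assms(3)] .
  moreover have "(\<lambda>x. x + v) ` C = (+) v ` C"
    by (rule image_cong) (simp_all add: add.commute)
  ultimately show ?thesis
    by simp
qed

lemma invariant_partition_cosets: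
  fixes X :: "'a::ab_group_add set"
  assumes X: "add_subgroup X" and G: "\<And>g. g \<in> G \<Longrightarrow> preserves_cosets g X"
  shows "invariant_partition G UNIV (range (\<lambda>x. (+) x ` X))"
proof -
  have self: "x \<in> (+) x ` X" for x
    using image_eqI[of x "(+) x" 0] add_subgroup_zero[OF X] by simp
  have disjoint: "(+) x ` X \<inter> (+) y ` X = {}" if "(+) x ` X \<noteq> (+) y ` X" for x y
  proof (rule ccontr)
    assume "(+) x ` X \<inter> (+) y ` X \<noteq> {}"
    then obtain a b where "a \<in> X" "b \<in> X" "x + a = y + b"
      by auto
    then show False
      using that coset_eq_if_mem[OF X] by metis
  qed
  show ?thesis
    unfolding invariant_partition_def
    using self disjoint G by (auto simp: preserves_cosets_def)
qed

lemma invariant_partition_eq_cosets: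
  fixes G :: "('a::ab_group_add \<Rightarrow> 'a) set"
  assumes T: "\<And>v. (\<lambda>x. x + v) \<in> G" and P: "invariant_partition G UNIV P"
    and B: "B \<in> P" "0 \<in> B"
  shows "P = range (\<lambda>x. (+) x ` B)"
proof
  show "P \<subseteq> range (\<lambda>x. (+) x ` B)"
  proof
    fix C assume C: "C \<in> P"
    then obtain c where "c \<in> C"
      using invariant_partition_nonempty[OF P] by blast
    then have "0 \<in> (+) (- c) ` C"
      by (rule image_eqI[rotated]) simp
    then have "(+) (- c) ` C = B"
      using invariant_partition_block_eq[OF P invariant_partition_translate_block[OF T P C] B(1)] B(2) by blast
    moreover have "(+) c ` ((+) (- c) ` C) = C"
      by (simp add: image_image)
    ultimately show "C \<in> range (\<lambda>x. (+) x ` B)"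
      by blast
  qed
  show "range (\<lambda>x. (+) x ` B) \<subseteq> P"
    using invariant_partition_translate_block[OF T P B(1)] by blast
qed

lemma add_subgroup_block:
  fixes G :: "('a::ab_group_add \<Rightarrow> 'a) set"
  assumes T: "\<And>v. (\<lambda>x. x + v) \<in> G" and P: "invariant_partition G UNIV P"
    and B: "B \<in> P" "0 \<in> B"
  shows "add_subgroup B"
proof -
  have shift: "(+) a ` B = B" if "z \<in> (+) a ` B" "z \<in> B" for a z
    using invariant_partition_block_eq[OF P invariant_partition_translate_block[OF T P B(1)] B(1) that] .
  have self: "a \<in> (+) a ` B" for a
    using B(2) by (rule image_eqI[rotated]) simp
  have "a + b \<in> B" if "a \<in> B" "b \<in> B" for a b
  proof -
    have "a + b \<in> (+) a ` B"
      using that(2) by (rule imageI)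
    then show ?thesis
      using shift[OF self that(1)] by simp
  qed
  moreover have "- a \<in> B" if "a \<in> B" for a
  proof -
    have "0 \<in> (+) (- a) ` B"
      using that by (rule image_eqI[rotated]) simp
    then show ?thesis
      using shift[OF _ B(2), of "- a"] self[of "- a"] by simp
  qed
  ultimately show ?thesis
    unfolding add_subgroup_def using B(2) by blast
qed

lemma preserves_cosets_block:
  fixes G :: "('a::ab_group_add \<Rightarrow> 'a) set"
  assumes T: "\<And>v. (\<lambda>x. x + v) \<in> G" and P: "invariant_partition G UNIV P"
    and B: "B \<in> P" "0 \<in> B" and g: "g \<in> G"
  shows "preserves_cosets g B"
  unfolding preserves_cosets_def
proof
  fix x
  have self: "y \<in> (+) y ` B" for y
    using B(2) by (rule image_eqI[rotated]) simp
  have "g ` ((+) x ` B) \<in> P"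
    using invariant_partition_image[OF P g invariant_partition_translate_block[OF T P B(1)]] .
  moreover have "g x \<in> g ` ((+) x ` B)"
    using self by (rule imageI)
  ultimately show "g ` ((+) x ` B) = (+) (g x) ` B"
    using invariant_partition_block_eq[OF P _ invariant_partition_translate_block[OF T P B(1)] _ self]
    by blast
qed

lemma primitive_on_iff_trivial_invariant_subgroups:
  fixes G :: "('a::ab_group_add \<Rightarrow> 'a) set"
  assumes T: "\<And>v. (\<lambda>x. x + v) \<in> G"
  shows "primitive_on G UNIV \<longleftrightarrow>
    (\<forall>X. add_subgroup X \<and> (\<forall>g\<in>G. preserves_cosets g X) \<longrightarrow> X = {0} \<or> X = UNIV)"
proof (intro iffI allI impI)
  fix X assume prim: "primitive_on G UNIV"
    and X: "add_subgroup X \<and> (\<forall>g\<in>G. preserves_cosets g X)"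
  have "invariant_partition G UNIV (range (\<lambda>x. (+) x ` X))"
    using X by (intro invariant_partition_cosets) auto
  then have "range (\<lambda>x. (+) x ` X) = {UNIV} \<or> range (\<lambda>x. (+) x ` X) = range (\<lambda>x. {x})"
    using prim unfolding primitive_on_def by blast
  moreover have "X \<in> range (\<lambda>x. (+) x ` X)"
    using rangeI[of "\<lambda>x. (+) x ` X" 0] by simp
  ultimately have "X = UNIV \<or> (\<exists>y. X = {y})"
    by blast
  then show "X = {0} \<or> X = UNIV"
    using add_subgroup_zero[of X] X by blast
next
  assume trivial: "\<forall>X. add_subgroup X \<and> (\<forall>g\<in>G. preserves_cosets g X) \<longrightarrow> X = {0} \<or> X = UNIV"
  have "transitive_on G UNIV"
    unfolding transitive_on_def
  proof (intro ballI)
    fix x y :: 'a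
    show "\<exists>g\<in>G. g x = y"
      using T[of "y - x"] by (intro bexI) simp_all
  qed
  moreover have "P = {UNIV} \<or> P = range (\<lambda>x. {x})" if P: "invariant_partition G UNIV P" for P
  proof -
    obtain B where B: "B \<in> P" "0 \<in> B"
      using invariant_partition_ex_block[OF P UNIV_I] .
    have P_cosets: "P = range (\<lambda>x. (+) x ` B)"
      by (rule invariant_partition_eq_cosets[OF T P B])
    have "B = {0} \<or> B = UNIV"
      using trivial add_subgroup_block[OF T P B] preserves_cosets_block[OF T P B] by blast
    then show ?thesis
    proof
      assume "B = {0}"
      then show ?thesis
        using P_cosets by simp
    next
      assume "B = UNIV"
      then have "P = range (\<lambda>x. UNIV)"
        using P_cosets by simp
      then show ?thesis
        by simp
    qed
  qed
  ultimately show "primitive_on G UNIV"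
    unfolding primitive_on_def by blast
qed

lemma preserves_cosets_diff_mem:
  assumes "preserves_cosets g X" and "u \<in> X"
  shows "g (x + u) - g x \<in> X"
proof -
  have "g (x + u) \<in> g ` ((+) x ` X)"
    using assms(2) by (intro imageI)
  then obtain w where "w \<in> X" "g (x + u) = g x + w"
    using assms(1) unfolding preserves_cosets_def by auto
  then show ?thesis
    by simp
qed

lemma preserves_cosets_id: "preserves_cosets id X"
  by (simp add: preserves_cosets_def)

lemma preserves_cosets_translation: "preserves_cosets (\<lambda>x. x + v) X"
  unfolding preserves_cosets_def by (simp add: image_image add_ac)

lemma preserves_cosets_comp:
  "preserves_cosets f X \<Longrightarrow> preserves_cosets g X \<Longrightarrow> preserves_cosets (f \<circ> g) X"
  unfolding preserves_cosets_def image_comp[symmetric] by simp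

lemma preserves_cosets_inv:
  assumes "bij g" and "preserves_cosets g X"
  shows "preserves_cosets (inv g) X"
  unfolding preserves_cosets_def
proof
  fix y
  obtain x where y: "y = g x"
    using \<open>bij g\<close> by (metis bij_pointE)
  have "inv g ` ((+) y ` X) = inv g ` (g ` ((+) x ` X))"
    using assms(2) y unfolding preserves_cosets_def by simp
  also have "\<dots> = (+) x ` X"
    using \<open>bij g\<close> by (simp add: bij_is_inj image_inv_f_f)
  finally show "inv g ` ((+) y ` X) = (+) (inv g y) ` X"
    using \<open>bij g\<close> y by (simp add: bij_is_inj)
qed

lemma preserves_cosets_gen_group:
  assumes "\<And>s. s \<in> S \<Longrightarrow> bij s \<and> preserves_cosets s X" and "g \<in> gen_group S"
  shows "preserves_cosets g X"
  using assms(2)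
proof induction
  case gen_id
  show ?case
    by (rule preserves_cosets_id)
next
  case (gen_gen s)
  then show ?case
    using assms(1) by blast
next
  case (gen_inv s)
  then show ?case
    using assms(1) preserves_cosets_inv by blast
next
  case (gen_comp f g)
  show ?case
    using gen_comp.IH by (rule preserves_cosets_comp)
qed

lemma bij_translation: "bij (\<lambda>x::'a::group_add. x + v)"
  by (simp add: bij_def)

lemma preserves_cosets_if_diff_mem:
  fixes g :: "'a::{ab_group_add,finite} \<Rightarrow> 'a"
  assumes "inj g" and diff: "\<And>x u. u \<in> X \<Longrightarrow> g (x + u) - g x \<in> X"
  shows "preserves_cosets g X"
  unfolding preserves_cosets_def
proof
  fix x
  have "g ` ((+) x ` X) \<subseteq> (+) (g x) ` X"
  proof
    fix z assume "z \<in> g ` ((+) x ` X)"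
    then obtain u where "u \<in> X" "z = g x + (g (x + u) - g x)"
      by auto
    then show "z \<in> (+) (g x) ` X"
      using diff by blast
  qed
  moreover have "card (g ` ((+) x ` X)) = card ((+) (g x) ` X)"
    using \<open>inj g\<close> by (simp add: card_image inj_on_def)
  ultimately show "g ` ((+) x ` X) = (+) (g x) ` X"
    by (simp add: card_subset_eq)
qed

instance bit :: finite
proof
  have "(UNIV :: bit set) = {0, 1}"
    by (auto intro: bit_not_zero_iff[THEN iffD1])
  then show "finite (UNIV :: bit set)"
    by (metis finite.emptyI finite_insert)
qed

lemma bit_add_self [simp]: "(b::bit) + b = 0"
  by (cases b) auto

lemma vec_add_self [simp]: "(x::bit^'n) + x = 0"
  by (simp add: vec_eq_iff)

lemma vec_add_cancel_left [simp]: "(x::bit^'n) + (x + y) = y"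
  by (metis add.assoc add.left_neutral vec_add_self)

lemma vec_uminus [simp]: "- (x::bit^'n) = x"
  by (metis add_minus_cancel add.commute add.right_neutral vec_add_self)

lemma vec_diff_eq_add [simp]: "(x::bit^'n) - y = x + y"
  by (simp add: diff_conv_add_uminus)

lemma vec_add_eq_0_iff [simp]: "(x::bit^'n) + y = 0 \<longleftrightarrow> x = y"
  by (metis vec_add_cancel_left add.right_neutral vec_add_self)

lemma AGL_if_derivatives_constant:
  fixes \<rho> :: "bit ^ 'n \<Rightarrow> bit ^ 'n"
  assumes "bij \<rho>" and const: "\<And>x d. \<rho> (x + d) + \<rho> x = \<rho> d + \<rho> 0"
  shows "\<rho> \<in> AGL"
proof -
  define A where "A x = \<rho> x + \<rho> 0" for x
  have additive: "A (x + y) = A x + A y" for x y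
    using const[of x y] unfolding A_def by (metis add.assoc add.commute vec_add_cancel_left)
  have "A (c *s x) = c *s A x" for c x
    by (cases c) (auto simp: A_def)
  then have "Vector_Spaces.linear (*s) (*s) A"
    using additive vec.vector_space_axioms by (auto simp: Vector_Spaces.linear_iff)
  moreover have "bij A"
  proof -
    have "A = (+) (\<rho> 0) \<circ> \<rho>"
      by (auto simp: A_def add.commute)
    then show ?thesis
      using \<open>bij \<rho>\<close> by (simp add: bij_comp)
  qed
  moreover have "\<rho> = (\<lambda>x. A x + \<rho> 0)"
    by (auto simp: A_def add.assoc)
  ultimately show ?thesis
    unfolding AGL_def GL_def by blast
qed

lemma add_subgroup_trivial_if_derivative_closed:
  fixes \<rho> :: "bit ^ 'n \<Rightarrow> bit ^ 'n"
  assumes "bij \<rho>" and prim: "primitive_on (gen_group (insert \<rho> Tn)) UNIV"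
    and X: "add_subgroup X" and closed: "\<And>x u. u \<in> X \<Longrightarrow> \<rho> (x + u) + \<rho> x \<in> X"
  shows "X = {0} \<or> X = UNIV"
proof -
  have translation_mem: "(\<lambda>x. x + v) \<in> gen_group (insert \<rho> Tn)" for v
    by (rule gen_gen) (auto simp: Tn_def)
  have "preserves_cosets \<rho> X"
    using \<open>bij \<rho>\<close> closed by (intro preserves_cosets_if_diff_mem) (simp_all add: bij_is_inj)
  then have "bij s \<and> preserves_cosets s X" if "s \<in> insert \<rho> Tn" for s
    using that \<open>bij \<rho>\<close> by (auto simp: Tn_def bij_translation preserves_cosets_translation)
  then have "\<forall>g\<in>gen_group (insert \<rho> Tn). preserves_cosets g X"
    using preserves_cosets_gen_group by blast
  then show ?thesis
    using prim X primitive_on_iff_trivial_invariant_subgroups[OF translation_mem] by blast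
qed

section \<open>Subgroups of V \<times> V whose cosets are permuted by \<open>rho_bar \<rho>\<close>\<close>

lemma snd_mem_image: "(a, b) \<in> A \<Longrightarrow> b \<in> snd ` A"
  by (rule image_eqI[of _ snd "(a, b)"]) simp_all

lemma inv_rho_bar: "inv (rho_bar \<rho>) = (\<lambda>(p, q). (p + q + \<rho> p, q + \<rho> p))"
  by (rule inv_equality) (auto simp: rho_bar_def add_ac)

locale rho_bar_block =
  fixes \<rho> :: "bit ^ 'n \<Rightarrow> bit ^ 'n" and U :: "((bit ^ 'n) \<times> (bit ^ 'n)) set"
  assumes subgroup: "add_subgroup U"
    and rho_bar: "preserves_cosets (rho_bar \<rho>) U"
    and rho_bar_inv: "preserves_cosets (inv (rho_bar \<rho>)) U"
begin

lemma zero_mem: "(0, 0) \<in> U"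
  using add_subgroup_zero[OF subgroup] by (simp add: zero_prod_def)

lemma add_mem: "(a, b) \<in> U \<Longrightarrow> (c, d) \<in> U \<Longrightarrow> (a + c, b + d) \<in> U"
  using add_subgroup_add[OF subgroup, of "(a, b)" "(c, d)"] by simp

lemma rho_bar_step:
  assumes "(u1, u2) \<in> U"
  shows "(u2, \<rho> (x + (u1 + u2)) + \<rho> x) \<in> U"
proof -
  have "rho_bar \<rho> ((x, 0) + (u1, u2)) - rho_bar \<rho> (x, 0) \<in> U"
    using preserves_cosets_diff_mem[OF rho_bar assms] .
  from add_subgroup_add[OF subgroup assms this] show ?thesis
    by (simp add: rho_bar_def add_ac)
qed

lemma rho_bar_inv_step:
  assumes "(u1, u2) \<in> U"
  shows "(u2 + (\<rho> (x + u1) + \<rho> x), \<rho> (x + u1) + \<rho> x) \<in> U"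
proof -
  have "inv (rho_bar \<rho>) ((x, 0) + (u1, u2)) - inv (rho_bar \<rho>) (x, 0) \<in> U"
    using preserves_cosets_diff_mem[OF rho_bar_inv assms] .
  from add_subgroup_add[OF subgroup assms this] show ?thesis
    by (simp add: inv_rho_bar add_ac)
qed

lemma add_subgroup_snd: "add_subgroup (snd ` U)"
  unfolding add_subgroup_def
proof (intro conjI ballI)
  show "0 \<in> snd ` U"
    using zero_mem by force
next
  fix a b assume "a \<in> snd ` U" "b \<in> snd ` U"
  then obtain a' b' where "(a', a) \<in> U" "(b', b) \<in> U"
    by force
  then show "a + b \<in> snd ` U"
    using add_mem by force
qed simp

lemma derivative_mem_snd:
  assumes "q \<in> snd ` U"
  shows "\<rho> (x + q) + \<rho> x \<in> snd ` U"
proof -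
  obtain p where "(p, q) \<in> U"
    using assms by force
  from rho_bar_inv_step[OF rho_bar_step[OF this, of 0], of x] show ?thesis
    by force
qed

lemma add_subgroup_kernel: "add_subgroup {u. (u, 0) \<in> U}"
  unfolding add_subgroup_def using zero_mem add_mem[of _ 0 _ 0] by auto

lemma derivative_mem_kernel:
  assumes "(u, 0) \<in> U"
  shows "(\<rho> (x + u) + \<rho> x, 0) \<in> U"
  using rho_bar_inv_step[OF rho_bar_step[OF assms, of x], of 0] by simp

lemma eq_zero_if_snd_zero:
  assumes "inj \<rho>" and "snd ` U = {0}"
  shows "U = {0}"
proof -
  have "(u1, u2) = 0" if "(u1, u2) \<in> U" for u1 u2
  proof -
    have "u2 = 0"
      using snd_mem_image[OF that] assms(2) by simp
    then have "(u1, 0) \<in> U"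
      using that by simp
    from snd_mem_image[OF rho_bar_inv_step[OF this, of 0]] have "\<rho> u1 + \<rho> 0 = 0"
      using assms(2) by simp
    then have "u1 = 0"
      using assms(1) by (simp add: inj_eq)
    with \<open>u2 = 0\<close> show ?thesis
      by (simp add: zero_prod_def)
  qed
  then show ?thesis
    using zero_mem by (auto simp: zero_prod_def)
qed

lemma eq_UNIV_if_snd_and_kernel_UNIV:
  assumes "snd ` U = UNIV" and "{u. (u, 0) \<in> U} = UNIV"
  shows "U = UNIV"
proof -
  have "(a, b) \<in> U" for a b
  proof -
    have "b \<in> snd ` U"
      using assms(1) by simp
    then obtain c where "(c, b) \<in> U"
      by force
    moreover have "(c + a, 0) \<in> U"
      using assms(2) by blast
    ultimately have "(c + (c + a), b + 0) \<in> U"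
      by (rule add_mem)
    then show ?thesis
      by simp
  qed
  then show ?thesis
    by auto
qed

lemma constant_derivatives_if_kernel_zero:
  assumes "snd ` U = UNIV" and "{u. (u, 0) \<in> U} = {0}"
  shows "\<rho> (x + d) + \<rho> x = \<rho> d + \<rho> 0"
proof -
  have "d \<in> snd ` U"
    using assms(1) by simp
  then obtain p where "(p, d) \<in> U"
    by force
  from rho_bar_inv_step[OF this, of 0]
  have v: "(d + (\<rho> p + \<rho> 0), \<rho> p + \<rho> 0) \<in> U"
    by simp
  have "(\<rho> p + \<rho> 0, \<rho> (x + d) + \<rho> x) \<in> U" and "(\<rho> p + \<rho> 0, \<rho> d + \<rho> 0) \<in> U"
    using rho_bar_step[OF v, of x] rho_bar_step[OF v, of 0] by (simp_all add: add_ac)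
  from add_mem[OF this] have "(0, (\<rho> (x + d) + \<rho> x) + (\<rho> d + \<rho> 0)) \<in> U"
    by simp
  from rho_bar_inv_step[OF this, of 0]
  have "(\<rho> (x + d) + \<rho> x) + (\<rho> d + \<rho> 0) \<in> {u. (u, 0) \<in> U}"
    by simp
  then show ?thesis
    using assms(2) by simp
qed

lemma eq_zero_or_UNIV:
  assumes "bij \<rho>" and "\<rho> \<notin> AGL" and prim: "primitive_on (gen_group (insert \<rho> Tn)) UNIV"
  shows "U = {0} \<or> U = UNIV"
proof -
  have "snd ` U = {0} \<or> snd ` U = UNIV"
    by (rule add_subgroup_trivial_if_derivative_closed[OF \<open>bij \<rho>\<close> prim add_subgroup_snd
          derivative_mem_snd])
  then show ?thesis
  proof
    assume "snd ` U = {0}"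
    then show ?thesis
      by (intro disjI1 eq_zero_if_snd_zero bij_is_inj[OF \<open>bij \<rho>\<close>])
  next
    assume snd_UNIV: "snd ` U = UNIV"
    have "{u. (u, 0) \<in> U} = {0} \<or> {u. (u, 0) \<in> U} = UNIV"
      by (rule add_subgroup_trivial_if_derivative_closed[OF \<open>bij \<rho>\<close> prim add_subgroup_kernel])
        (simp add: derivative_mem_kernel)
    moreover have "{u. (u, 0) \<in> U} \<noteq> {0}"
    proof
      assume "{u. (u, 0) \<in> U} = {0}"
      then have "\<rho> \<in> AGL"
        by (intro AGL_if_derivatives_constant[OF \<open>bij \<rho>\<close>]
            constant_derivatives_if_kernel_zero[OF snd_UNIV])
      with \<open>\<rho> \<notin> AGL\<close> show False ..
    qed
    ultimately show ?thesis
      using eq_UNIV_if_snd_and_kernel_UNIV[OF snd_UNIV] by blast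
  qed
qed

end

lemma primitive_on_gen_group_rho_bar:
  fixes \<rho> :: "bit ^ 'n \<Rightarrow> bit ^ 'n"
  assumes "bij \<rho>" and "\<rho> \<notin> AGL" and "primitive_on (gen_group (insert \<rho> Tn)) UNIV"
    and S: "rho_bar \<rho> \<in> S" "T2n \<subseteq> S"
  shows "primitive_on (gen_group S) UNIV"
proof -
  have translation_mem: "(\<lambda>x. x + v) \<in> gen_group S" for v
  proof (rule gen_gen)
    obtain v1 v2 where "v = (v1, v2)"
      by force
    then have "(\<lambda>x. x + v) = (\<lambda>(x, y). (x + v1, y + v2))"
      by auto
    moreover have "(\<lambda>(x, y). (x + v1, y + v2)) \<in> T2n"
      unfolding T2n_def by blast
    ultimately show "(\<lambda>x. x + v) \<in> S"
      using S(2) by auto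
  qed
  show ?thesis
    unfolding primitive_on_iff_trivial_invariant_subgroups[OF translation_mem]
  proof (intro allI impI)
    fix U assume U: "add_subgroup U \<and> (\<forall>g\<in>gen_group S. preserves_cosets g U)"
    interpret rho_bar_block \<rho> U
    proof
      show "add_subgroup U" and "preserves_cosets (rho_bar \<rho>) U"
        and "preserves_cosets (inv (rho_bar \<rho>)) U"
        using U gen_gen[OF S(1)] gen_inv[OF S(1)] by blast+
    qed
    show "U = {0} \<or> U = UNIV"
      using eq_zero_or_UNIV assms(1-3) .
  qed
qed

theorem theorem3p3:
  fixes \<rho> \<theta> :: "bit ^ 'n \<Rightarrow> bit ^ 'n"
  assumes "bij \<rho>" and "\<rho> \<notin> AGL"
    and "\<theta> \<in> GL"
    and "primitive_on (gen_group (insert \<rho> Tn)) UNIV"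
  shows "primitive_on (gen_group ({rho_bar \<rho>, theta_bar \<theta>} \<union> T2n)) UNIV
       \<and> primitive_on (gen_group (insert (rho_bar \<rho>) T2n)) UNIV"
  by (intro conjI primitive_on_gen_group_rho_bar[OF assms(1,2,4)]) auto

end
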